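(* Let $\lambda\geqslant1$ be a cardinal, $n$ a positive integer, and $\tau$ any (Hausdorff) inverse semigroup topology on $\mathscr{I}_\lambda^n$ (i.e. a topology making multiplication and inversion continuous). Then $(\mathscr{I}_\lambda^n,\tau)$ is absolutely $H$-closed in the class of topological inverse semigroups; that is, for every topological inverse semigroup $T$ and every continuous homomorphism $h\colon(\mathscr{I}_\lambda^n,\tau)\to T$, the image $(\mathscr{I}_\lambda^n)h$ is closed in every topological inverse semigroup containing it as a subsemigroup.
   Context: All topological spaces are Hausdorff. A topological inverse semigroup is an inverse semigroup with a topology making multiplication and inversion continuous. For a set $X$ of cardinality $\lambda$, $\mathscr{I}(X)$ is the semigroup of all partial one-to-one maps of $X$ (including the empty map) under composition; the rank of $\alpha$ is $|\operatorname{ran}\alpha|$, and $\mathscr{I}_\lambda^n=\{\alpha\in\mathscr{I}(X):\operatorname{rank}\alpha\leqslant n\}$. Given a class $\mathfrak{S}$ of topological semigroups, $S\in\mathfrak{S}$ is $H$-closed in $\mathfrak{S}$ if it is closed in every $T\in\mathfrak{S}$ containing $S$ as a subsemigroup, and absolutely $H$-closed in $\mathfrak{S}$ if every continuous homomorphic image of $S$ in any member of $\mathfrak{S}$ is $H$-closed in $\mathfrak{S}$. *)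

theory Defs
  imports "HOL-Analysis.Analysis"
begin

definition inverse_semigroup :: "'a set \<Rightarrow> ('a \<Rightarrow> 'a \<Rightarrow> 'a) \<Rightarrow> bool" where
  "inverse_semigroup S m \<longleftrightarrow>
     (\<forall>x\<in>S. \<forall>y\<in>S. m x y \<in> S) \<and>
     (\<forall>x\<in>S. \<forall>y\<in>S. \<forall>z\<in>S. m (m x y) z = m x (m y z)) \<and>
     (\<forall>x\<in>S. \<exists>!y. y \<in> S \<and> m (m x y) x = x \<and> m (m y x) y = y)"

definition sinv :: "'a set \<Rightarrow> ('a \<Rightarrow> 'a \<Rightarrow> 'a) \<Rightarrow> 'a \<Rightarrow> 'a" where
  "sinv S m x = (THE y. y \<in> S \<and> m (m x y) x = x \<and> m (m y x) y = y)"

definition top_inv_semigroup :: "'a set \<Rightarrow> ('a \<Rightarrow> 'a \<Rightarrow> 'a) \<Rightarrow> 'a topology \<Rightarrow> bool" where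
  "top_inv_semigroup S m T \<longleftrightarrow>
     inverse_semigroup S m \<and> topspace T = S \<and> Hausdorff_space T \<and>
     continuous_map (prod_topology T T) T (\<lambda>(x, y). m x y) \<and>
     continuous_map T T (sinv S m)"

definition H_closed_TIS :: "'c itself \<Rightarrow> 'a set \<Rightarrow> ('a \<Rightarrow> 'a \<Rightarrow> 'a) \<Rightarrow> 'a topology \<Rightarrow> bool" where
  "H_closed_TIS (_ :: 'c itself) S m T \<longleftrightarrow>
     top_inv_semigroup S m T \<and>
     (\<forall>(U :: 'c set) mU TU e.
        top_inv_semigroup U mU TU \<and> e ` S \<subseteq> U \<and> inj_on e S \<and>
        (\<forall>x\<in>S. \<forall>y\<in>S. e (m x y) = mU (e x) (e y)) \<and>
        homeomorphic_map T (subtopology TU (e ` S)) e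
        \<longrightarrow> closedin TU (e ` S))"

definition partial_inj :: "'a set \<Rightarrow> ('a \<rightharpoonup> 'a) set" where
  "partial_inj X = {\<alpha>. dom \<alpha> \<subseteq> X \<and> ran \<alpha> \<subseteq> X \<and> inj_on \<alpha> (dom \<alpha>)}"

text \<open>Composition, written left to right: (\<alpha> \<cdot> \<beta>) applies \<alpha> first, then \<beta>.\<close>
definition pmult :: "('a \<rightharpoonup> 'a) \<Rightarrow> ('a \<rightharpoonup> 'a) \<Rightarrow> ('a \<rightharpoonup> 'a)" where
  "pmult \<alpha> \<beta> = \<beta> \<circ>\<^sub>m \<alpha>"

definition I_rank :: "'a set \<Rightarrow> nat \<Rightarrow> ('a \<rightharpoonup> 'a) set" where
  "I_rank X n = {\<alpha> \<in> partial_inj X. finite (ran \<alpha>) \<and> card (ran \<alpha>) \<le> n}"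

end

theory Submission
  imports Defs
begin

text \<open>
  Every homomorphic image of the semigroup I_rank X n of partial bijections of rank at
  most n is closed in any topological inverse semigroup containing it.

  Let g be such a homomorphism into a topological inverse semigroup U and let E be the
  image of the idempotents of I_rank X n, i.e. of the partial identities idm Y with
  card Y \<le> n.  Then E is a subsemilattice of U in which every element has at most 2^n
  elements below it; such a subsemilattice is closed (proved by induction on the size of
  the principal ideals).  For x in the closure of g ` I_rank X n, continuity of
  y \<mapsto> y y\<inverse> and y \<mapsto> y\<inverse> y puts x x\<inverse> = g (idm Y) and x\<inverse> x = g (idm Z) into E, and
  x = g (idm Y) x g (idm Z).  The continuous map y \<mapsto> g (idm Y) y g (idm Z) sends the image
  into the finite, hence closed, set of images of the maps with domain in Y and range in
  Z, so x lies in the image.  Finally, the image of any homomorphism is a topological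
  inverse subsemigroup, and composing with an embedding gives another homomorphism.
\<close>

section \<open>Partial bijections\<close>

definition idm :: "'a set \<Rightarrow> ('a \<rightharpoonup> 'a)" where
  "idm Y = (\<lambda>x. if x \<in> Y then Some x else None)"

definition pinv :: "('a \<rightharpoonup> 'a) \<Rightarrow> ('a \<rightharpoonup> 'a)" where
  "pinv a = (\<lambda>y. if y \<in> ran a then Some (SOME x. a x = Some y) else None)"

lemma dom_idm [simp]: "dom (idm Y) = Y"
  by (auto simp: idm_def dom_def)

lemma ran_idm [simp]: "ran (idm Y) = Y"
  by (auto simp: idm_def ran_def)

lemma pmult_idm_idm: "pmult (idm Y) (idm Z) = idm (Y \<inter> Z)"
  by (auto simp: pmult_def idm_def map_comp_def fun_eq_iff)

lemma idm_eq_iff [simp]: "idm Y = idm Z \<longleftrightarrow> Y = Z"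
  by (metis dom_idm)

lemma pmult_idm_left: "dom a \<subseteq> Y \<Longrightarrow> pmult (idm Y) a = a"
proof (rule ext)
  fix x assume "dom a \<subseteq> Y"
  then have "x \<notin> Y \<Longrightarrow> a x = None"
    by blast
  then show "pmult (idm Y) a x = a x"
    by (cases "x \<in> Y") (auto simp: pmult_def idm_def)
qed

lemma pinv_eq_Some: "inj_on a (dom a) \<Longrightarrow> pinv a y = Some x \<longleftrightarrow> a x = Some y"
proof
  assume "pinv a y = Some x"
  then have "y \<in> ran a" and "x = (SOME x. a x = Some y)"
    by (auto simp: pinv_def split: if_splits)
  then show "a x = Some y"
    by (auto simp: ran_def intro: someI)
next
  assume inj: "inj_on a (dom a)" and ax: "a x = Some y"
  have "a (SOME x. a x = Some y) = Some y"
    using ax by (rule someI)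
  then have "(SOME x. a x = Some y) = x"
    using inj ax by (metis domI inj_on_contraD)
  then show "pinv a y = Some x"
    using ax by (auto simp: pinv_def ran_def)
qed

lemma dom_pinv: "dom (pinv a) = ran a"
  by (auto simp: pinv_def dom_def)

lemma ran_pinv: "inj_on a (dom a) \<Longrightarrow> ran (pinv a) = dom a"
  by (auto simp: ran_def pinv_eq_Some)

lemma inj_pinv:
  assumes inj: "inj_on a (dom a)"
  shows "inj_on (pinv a) (ran a)"
proof (rule inj_onI)
  fix y1 y2 assume "y1 \<in> ran a" and eq: "pinv a y1 = pinv a y2"
  then obtain x where "a x = Some y1"
    by (auto simp: ran_def)
  then have "pinv a y2 = Some x"
    using eq pinv_eq_Some[OF inj] by metis
  then have "a x = Some y2"
    using pinv_eq_Some[OF inj] by blast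
  then show "y1 = y2"
    using \<open>a x = Some y1\<close> by simp
qed

lemma pmult_pinv_right: "inj_on a (dom a) \<Longrightarrow> pmult a (pinv a) = idm (dom a)"
  by (auto simp: pmult_def idm_def map_comp_def fun_eq_iff pinv_eq_Some split: option.splits)

lemma pmult_pinv_left: "inj_on a (dom a) \<Longrightarrow> pmult (pinv a) a = idm (ran a)"
proof
  fix y assume inj: "inj_on a (dom a)"
  show "pmult (pinv a) a y = idm (ran a) y"
  proof (cases "pinv a y")
    case None
    then have "y \<notin> ran a" using dom_pinv[of a] by blast
    then show ?thesis using None by (simp add: pmult_def idm_def)
  next
    case (Some x)
    then show ?thesis using inj by (auto simp: pmult_def idm_def pinv_eq_Some ran_def)
  qed
qed

lemma dom_ran_size:
  assumes "inj_on a (dom a)"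
  shows "finite (dom a) \<longleftrightarrow> finite (ran a)" and "card (dom a) = card (ran a)"
proof -
  have img: "a ` dom a = Some ` ran a"
    by (force simp: ran_def)
  show "finite (dom a) \<longleftrightarrow> finite (ran a)"
    using finite_image_iff[OF assms] img by (simp add: finite_image_iff)
  show "card (dom a) = card (ran a)"
    using card_image[OF assms] img by (simp add: card_image)
qed

lemma pmult_in_I_rank: "a \<in> I_rank X n \<Longrightarrow> b \<in> I_rank X n \<Longrightarrow> pmult a b \<in> I_rank X n"
proof -
  assume a: "a \<in> I_rank X n" and b: "b \<in> I_rank X n"
  have "ran (pmult a b) \<subseteq> ran b" and "dom (pmult a b) \<subseteq> dom a"
    by (auto simp: pmult_def ran_def dom_def map_comp_def split: option.splits)
  moreover have "inj_on (pmult a b) (dom (pmult a b))"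
    using a b unfolding I_rank_def partial_inj_def inj_on_def pmult_def map_comp_def
    by (auto split: option.splits) (metis domI option.inject)
  ultimately show ?thesis
    using a b by (auto simp: I_rank_def partial_inj_def intro: finite_subset card_mono order_trans)
qed

lemma pinv_in_I_rank: "a \<in> I_rank X n \<Longrightarrow> pinv a \<in> I_rank X n"
  using dom_ran_size[of a] inj_pinv[of a]
  by (auto simp: I_rank_def partial_inj_def dom_pinv ran_pinv)

lemma idm_in_I_rank: "Y \<subseteq> X \<Longrightarrow> finite Y \<Longrightarrow> card Y \<le> n \<Longrightarrow> idm Y \<in> I_rank X n"
  by (auto simp: I_rank_def partial_inj_def inj_on_def) (simp add: idm_def split: if_splits)

text \<open>The idempotents of I_rank X n, all of which are partial identities.\<close>
definition rank_idempotents :: "'a set \<Rightarrow> nat \<Rightarrow> ('a \<rightharpoonup> 'a) set" where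
  "rank_idempotents X n = {idm Y | Y. Y \<subseteq> X \<and> finite Y \<and> card Y \<le> n}"

lemma idm_in_rank_idempotents:
  "idm Y \<in> rank_idempotents X n \<longleftrightarrow> Y \<subseteq> X \<and> finite Y \<and> card Y \<le> n"
  by (auto simp: rank_idempotents_def)

lemma rank_idempotents_sub: "rank_idempotents X n \<subseteq> I_rank X n"
  by (auto simp: rank_idempotents_def idm_in_I_rank)

lemma idm_Int_in_rank_idempotents:
  "idm Y \<in> rank_idempotents X n \<Longrightarrow> idm (Y \<inter> Z) \<in> rank_idempotents X n"
  using card_mono[of Y "Y \<inter> Z"] by (auto simp: idm_in_rank_idempotents)

lemma dom_ran_idm_in_rank_idempotents:
  assumes "a \<in> I_rank X n"
  shows "idm (dom a) \<in> rank_idempotents X n" and "idm (ran a) \<in> rank_idempotents X n"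
  using assms dom_ran_size[of a]
  by (auto simp: I_rank_def partial_inj_def idm_in_rank_idempotents)

lemma finite_maps_between:
  assumes "finite Y" "finite Z"
  shows "finite {b. dom b \<subseteq> Y \<and> ran b \<subseteq> Z}"
proof -
  have "{b. dom b \<subseteq> Y \<and> ran b \<subseteq> Z} = (\<Union>A\<in>Pow Y. {b. dom b = A \<and> ran b \<subseteq> Z})"
    by auto
  then show ?thesis
    using assms by (auto intro!: finite_set_of_finite_maps dest: finite_subset)
qed

lemma dom_pmult_idm_left: "dom (pmult (pmult (idm Y) a) b) \<subseteq> Y"
proof
  fix x assume "x \<in> dom (pmult (pmult (idm Y) a) b)"
  then show "x \<in> Y"
    by (cases "x \<in> Y") (simp_all add: pmult_def idm_def domIff)
qed

lemma ran_pmult_idm_right: "ran (pmult b (idm Z)) \<subseteq> Z"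
proof
  fix y assume "y \<in> ran (pmult b (idm Z))"
  then obtain x where "pmult b (idm Z) x = Some y"
    by (auto simp: ran_def)
  then show "y \<in> Z"
    by (cases "b x") (auto simp: pmult_def idm_def split: if_splits)
qed

section \<open>Topological inverse semigroups\<close>

lemma sinv_inverse:
  assumes "inverse_semigroup S m" "x \<in> S"
  shows "sinv S m x \<in> S" and "m (m x (sinv S m x)) x = x"
    and "m (m (sinv S m x) x) (sinv S m x) = sinv S m x"
proof -
  have "\<exists>!y. y \<in> S \<and> m (m x y) x = x \<and> m (m y x) y = y"
    using assms unfolding inverse_semigroup_def by blast
  then have "sinv S m x \<in> S \<and> m (m x (sinv S m x)) x = x
      \<and> m (m (sinv S m x) x) (sinv S m x) = sinv S m x"
    unfolding sinv_def by (rule theI')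
  then show "sinv S m x \<in> S" "m (m x (sinv S m x)) x = x"
      "m (m (sinv S m x) x) (sinv S m x) = sinv S m x"
    by blast+
qed

lemma sinv_unique:
  assumes "inverse_semigroup S m" "x \<in> S" "y \<in> S" "m (m x y) x = x" "m (m y x) y = y"
  shows "sinv S m x = y"
proof -
  have "\<exists>!y. y \<in> S \<and> m (m x y) x = x \<and> m (m y x) y = y"
    using assms(1,2) unfolding inverse_semigroup_def by blast
  then show ?thesis
    unfolding sinv_def by (rule the1_equality) (use assms(3-5) in blast)
qed

lemma inverse_subsemigroup:
  assumes S: "inverse_semigroup S m" and "A \<subseteq> S"
    and mult: "\<And>x y. x \<in> A \<Longrightarrow> y \<in> A \<Longrightarrow> m x y \<in> A"
    and inv: "\<And>x. x \<in> A \<Longrightarrow> sinv S m x \<in> A"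
  shows "inverse_semigroup A m" and "\<And>x. x \<in> A \<Longrightarrow> sinv A m x = sinv S m x"
proof -
  have AS: "\<And>x. x \<in> A \<Longrightarrow> x \<in> S"
    using \<open>A \<subseteq> S\<close> by blast
  have unique: "\<exists>!y. y \<in> A \<and> m (m x y) x = x \<and> m (m y x) y = y" if x: "x \<in> A" for x
  proof (rule ex1I)
    show "sinv S m x \<in> A \<and> m (m x (sinv S m x)) x = x
        \<and> m (m (sinv S m x) x) (sinv S m x) = sinv S m x"
      using inv[OF x] sinv_inverse[OF S AS[OF x]] by blast
    show "y = sinv S m x" if "y \<in> A \<and> m (m x y) x = x \<and> m (m y x) y = y" for y
      using sinv_unique[OF S AS[OF x], of y] that AS by simp
  qed
  have "\<forall>x\<in>A. \<forall>y\<in>A. \<forall>z\<in>A. m (m x y) z = m x (m y z)"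
    using S AS unfolding inverse_semigroup_def by blast
  then show A: "inverse_semigroup A m"
    using mult unique unfolding inverse_semigroup_def by blast
  show "sinv A m x = sinv S m x" if "x \<in> A" for x
    using sinv_unique[OF A that inv[OF that]] sinv_inverse[OF S AS[OF that]] by blast
qed

lemma continuous_map_ident: "continuous_map X X (\<lambda>x. x)"
  using continuous_map_id by (simp add: id_def)

lemma continuous_map_mult:
  assumes "continuous_map (prod_topology T T) T (\<lambda>(x, y). m x y)"
    and "continuous_map X T f" "continuous_map X T g"
  shows "continuous_map X T (\<lambda>y. m (f y) (g y))"
  using continuous_map_compose[OF continuous_map_pairedI[OF assms(2,3)] assms(1)]
  by (simp add: o_def)

lemma top_inv_subsemigroup:
  assumes S: "top_inv_semigroup S m T" and "A \<subseteq> S"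
    and mult: "\<And>x y. x \<in> A \<Longrightarrow> y \<in> A \<Longrightarrow> m x y \<in> A"
    and inv: "\<And>x. x \<in> A \<Longrightarrow> sinv S m x \<in> A"
  shows "top_inv_semigroup A m (subtopology T A)"
proof -
  have IS: "inverse_semigroup S m" and top: "topspace T = S" and "Hausdorff_space T"
    and cm: "continuous_map (prod_topology T T) T (\<lambda>(x, y). m x y)"
    and ci: "continuous_map T T (sinv S m)"
    using S by (auto simp: top_inv_semigroup_def)
  note sub = inverse_subsemigroup[OF IS \<open>A \<subseteq> S\<close> mult inv]
  have "continuous_map (subtopology (prod_topology T T) (A \<times> A)) (subtopology T A)
      (\<lambda>(x, y). m x y)"
    using continuous_map_from_subtopology[OF cm] mult
    by (auto simp: continuous_map_in_subtopology)
  moreover have "continuous_map (subtopology T A) (subtopology T A) (sinv S m)"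
    using continuous_map_from_subtopology[OF ci] inv \<open>A \<subseteq> S\<close> top
    by (auto simp: continuous_map_in_subtopology)
  then have "continuous_map (subtopology T A) (subtopology T A) (sinv A m)"
    by (rule continuous_map_eq) (use sub(2) \<open>A \<subseteq> S\<close> top in auto)
  ultimately show ?thesis
    using sub(1) \<open>A \<subseteq> S\<close> top Hausdorff_space_subtopology[OF \<open>Hausdorff_space T\<close>]
    unfolding top_inv_semigroup_def subtopology_Times by auto
qed

lemma continuous_map_closure_into_closed:
  assumes "continuous_map X Y f" "f ` A \<subseteq> C" "closedin Y C" "x \<in> X closure_of A"
  shows "f x \<in> C"
  using continuous_map_image_closure_subset[OF assms(1)] closure_of_mono[OF assms(2)]
    closure_of_closedin[OF assms(3)] assms(4)
  by blast

section \<open>Subsemilattices with bounded principal ideals are closed\<close>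

definition down_set :: "'a set \<Rightarrow> ('a \<Rightarrow> 'a \<Rightarrow> 'a) \<Rightarrow> 'a \<Rightarrow> 'a set" where
  "down_set E m c = {d \<in> E. m d c = d}"

lemma mult_neighbourhood:
  assumes cm: "continuous_map (prod_topology T T) T (\<lambda>(x, y). m x y)"
    and W: "openin T W" and x: "x \<in> topspace T" and "m x x \<in> W"
  obtains V where "openin T V" "x \<in> V" "\<And>c d. c \<in> V \<Longrightarrow> d \<in> V \<Longrightarrow> m c d \<in> W"
proof -
  define P where "P = {z \<in> topspace (prod_topology T T). (\<lambda>(x, y). m x y) z \<in> W}"
  have open_P: "openin (prod_topology T T) P"
    unfolding P_def using openin_continuous_map_preimage[OF cm W] .
  have "(x, x) \<in> P"
    using x \<open>m x x \<in> W\<close> by (simp add: P_def)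
  then have "\<exists>V1 V2. openin T V1 \<and> openin T V2 \<and> x \<in> V1 \<and> x \<in> V2 \<and> V1 \<times> V2 \<subseteq> P"
    using iffD1[OF openin_prod_topology_alt open_P] by blast
  then obtain V1 V2 where V: "openin T V1" "openin T V2" "x \<in> V1" "x \<in> V2"
    and V12: "V1 \<times> V2 \<subseteq> P"
    by blast
  have "m c d \<in> W" if "c \<in> V1 \<inter> V2" "d \<in> V1 \<inter> V2" for c d
  proof -
    have "(c, d) \<in> P"
      using V12 that by blast
    then show ?thesis
      by (simp add: P_def)
  qed
  then show ?thesis
    by (intro that[of "V1 \<inter> V2"]) (use V in auto)
qed

lemma two_points_near_limit:
  assumes H: "Hausdorff_space X" and x: "x \<in> X closure_of A" "x \<notin> A"
    and V: "openin X V" "x \<in> V"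
  obtains c d where "c \<in> A" "c \<in> V" "d \<in> A" "d \<in> V" "c \<noteq> d"
proof -
  obtain c where c: "c \<in> A" "c \<in> V"
    using x(1) V by (meson in_closure_of)
  have "x \<in> topspace X"
    by (rule subsetD[OF closure_of_subset_topspace x(1)])
  moreover have "c \<in> topspace X"
    using c(2) openin_subset[OF V(1)] by blast
  moreover have "x \<noteq> c"
    using x(2) c(1) by blast
  ultimately obtain G1 G2 where G: "openin X G1" "openin X G2" "x \<in> G1" "c \<in> G2" "disjnt G1 G2"
    using H by (meson Hausdorff_space_def)
  have "openin X (V \<inter> G1)" "x \<in> V \<inter> G1"
    using V G by auto
  then obtain d where d: "d \<in> A" "d \<in> V" "d \<in> G1"
    using x(1) by (meson in_closure_of IntE)
  have "c \<noteq> d"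
    using G(4,5) d(3) by (auto simp: disjnt_def)
  then show ?thesis
    using that[OF c d(1,2)] by blast
qed

locale bounded_subsemilattice =
  fixes U :: "'a set" and m :: "'a \<Rightarrow> 'a \<Rightarrow> 'a" and T :: "'a topology"
    and E :: "'a set" and N :: nat
  assumes tis: "top_inv_semigroup U m T"
    and sub: "E \<subseteq> U"
    and mult_closed: "\<And>c d. c \<in> E \<Longrightarrow> d \<in> E \<Longrightarrow> m c d \<in> E"
    and comm: "\<And>c d. c \<in> E \<Longrightarrow> d \<in> E \<Longrightarrow> m c d = m d c"
    and idem: "\<And>c. c \<in> E \<Longrightarrow> m c c = c"
    and down_finite: "\<And>c. c \<in> E \<Longrightarrow> finite (down_set E m c)"
    and down_card: "\<And>c. c \<in> E \<Longrightarrow> card (down_set E m c) \<le> N"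
begin

lemma assoc: "c \<in> E \<Longrightarrow> d \<in> E \<Longrightarrow> e \<in> E \<Longrightarrow> m (m c d) e = m c (m d e)"
  using tis sub unfolding top_inv_semigroup_def inverse_semigroup_def by blast

lemma down_set_mult: "c \<in> E \<Longrightarrow> d \<in> E \<Longrightarrow> down_set E m (m c d) \<subseteq> down_set E m c"
proof
  fix e assume c: "c \<in> E" and d: "d \<in> E" and "e \<in> down_set E m (m c d)"
  then have e: "e \<in> E" and ecd: "m e (m c d) = e"
    by (auto simp: down_set_def)
  have "m e c = m (m e (m c d)) c"
    using ecd by simp
  also have "\<dots> = m e (m d (m c c))"
    using c d e mult_closed comm[OF c d] by (simp add: assoc)
  also have "\<dots> = e"
    using c d ecd comm[OF c d] by (simp add: idem)
  finally show "e \<in> down_set E m c"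
    using e by (simp add: down_set_def)
qed

text \<open>Two elements whose principal ideals are no larger than that of their product
  coincide: both must then equal the product.\<close>
lemma eq_if_down_sets_not_larger:
  assumes c: "c \<in> E" and d: "d \<in> E"
    and "card (down_set E m c) \<le> card (down_set E m (m c d))"
    and "card (down_set E m d) \<le> card (down_set E m (m c d))"
  shows "c = d"
proof -
  have "down_set E m (m c d) = down_set E m c"
    using card_subset_eq[OF down_finite[OF c] down_set_mult[OF c d]] assms(3)
      card_mono[OF down_finite[OF c] down_set_mult[OF c d]] by linarith
  then have "c \<in> down_set E m (m c d)"
    using c idem by (simp add: down_set_def)
  then have "c = m c (m c d)"
    by (simp add: down_set_def)
  also have "\<dots> = m c d"
    using c d by (simp add: assoc[symmetric] idem)
  finally have c_eq: "c = m c d" .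
  have "down_set E m (m c d) = down_set E m d"
    using card_subset_eq[OF down_finite[OF d] down_set_mult[OF d c]] assms(4)
      card_mono[OF down_finite[OF d] down_set_mult[OF d c]] comm[OF c d] by simp
  then have "d \<in> down_set E m (m d c)"
    using d idem comm[OF c d] by (simp add: down_set_def)
  then have "d = m d (m d c)"
    by (simp add: down_set_def)
  also have "\<dots> = m (m d d) c"
    using assoc[OF d d c] by simp
  also have "\<dots> = m c d"
    using idem[OF d] comm[OF c d] by simp
  finally show "c = d"
    using c_eq by simp
qed

text \<open>Limits of idempotents are idempotent, since the idempotents form the equalizer of
  the identity and the squaring map.\<close>
lemma closure_idempotent:
  assumes x: "x \<in> T closure_of E"
  shows "m x x = x"
proof -
  have H: "Hausdorff_space T" and cm: "continuous_map (prod_topology T T) T (\<lambda>(x, y). m x y)"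
    using tis by (auto simp: top_inv_semigroup_def)
  show ?thesis
    by (rule forall_in_closure_of_eq[OF x H
          continuous_map_mult[OF cm continuous_map_ident continuous_map_ident] continuous_map_ident])
      (rule idem)
qed

text \<open>Induction on k: a limit x outside E would be idempotent, and two distinct c, d of the
  (k+1)-st stratum close to x would have c d in a neighbourhood of x avoiding the k-th
  stratum, contradicting eq_if_down_sets_not_larger.\<close>
lemma stratum_closure: "T closure_of {c \<in> E. card (down_set E m c) \<le> k} \<subseteq> E"
proof (induction k)
  case 0
  have "{c \<in> E. card (down_set E m c) \<le> 0} = {}"
    using down_finite idem by (force simp: down_set_def card_eq_0_iff)
  then show ?case
    by (simp only: closure_of_empty empty_subsetI)
next
  case (Suc k)
  let ?S = "\<lambda>k. {c \<in> E. card (down_set E m c) \<le> k}"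
  show ?case
  proof (rule subsetI, rule ccontr)
    fix x assume x: "x \<in> T closure_of ?S (Suc k)" and "x \<notin> E"
    have H: "Hausdorff_space T" and cm: "continuous_map (prod_topology T T) T (\<lambda>(x, y). m x y)"
      using tis by (auto simp: top_inv_semigroup_def)
    have xT: "x \<in> topspace T"
      using x by (simp add: in_closure_of)
    have "x \<notin> T closure_of ?S k"
      using Suc.IH \<open>x \<notin> E\<close> by blast
    then obtain W where W: "openin T W" "x \<in> W" and avoid: "\<And>c. c \<in> ?S k \<Longrightarrow> c \<notin> W"
      using xT by (auto simp: in_closure_of)
    have "m x x = x"
      using x closure_of_mono[of "?S (Suc k)" E T] closure_idempotent by blast
    then obtain V where V: "openin T V" "x \<in> V" and VW: "\<And>c d. c \<in> V \<Longrightarrow> d \<in> V \<Longrightarrow> m c d \<in> W"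
      using mult_neighbourhood[OF cm W(1) xT] W(2) by metis
    obtain c d where c: "c \<in> ?S (Suc k)" "c \<in> V" and d: "d \<in> ?S (Suc k)" "d \<in> V" and "c \<noteq> d"
      using two_points_near_limit[OF H x _ V] \<open>x \<notin> E\<close> by blast
    have "m c d \<notin> ?S k"
      using avoid VW c d by blast
    then have "card (down_set E m (m c d)) \<ge> Suc k"
      using mult_closed c d by simp
    then have "c = d"
      using c d by (intro eq_if_down_sets_not_larger) auto
    then show False
      using \<open>c \<noteq> d\<close> by blast
  qed
qed

text \<open>Hence E itself is closed, as the N-th stratum is all of E.\<close>
theorem closed: "closedin T E"
proof -
  have "E \<subseteq> {c \<in> E. card (down_set E m c) \<le> N}"
    using down_card by blast
  then have "T closure_of E \<subseteq> E"
    using closure_of_mono stratum_closure[of N] by blast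
  moreover have "E \<subseteq> topspace T"
    using tis sub by (simp add: top_inv_semigroup_def)
  ultimately show ?thesis
    using closure_of_subset_eq by blast
qed

end

section \<open>Homomorphic images of I_rank X n are closed\<close>

locale rank_homomorphism =
  fixes X :: "'a set" and n :: nat and U :: "'b set" and m :: "'b \<Rightarrow> 'b \<Rightarrow> 'b"
    and T :: "'b topology" and g :: "('a \<rightharpoonup> 'a) \<Rightarrow> 'b"
  assumes tis: "top_inv_semigroup U m T"
    and maps_into: "\<And>a. a \<in> I_rank X n \<Longrightarrow> g a \<in> U"
    and hom: "\<And>a b. a \<in> I_rank X n \<Longrightarrow> b \<in> I_rank X n \<Longrightarrow> g (pmult a b) = m (g a) (g b)"
begin

lemma inverse_semigroup: "inverse_semigroup U m"
  using tis by (simp add: top_inv_semigroup_def)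

lemma sinv_image:
  assumes a: "a \<in> I_rank X n"
  shows "sinv U m (g a) = g (pinv a)"
proof (rule sinv_unique[OF inverse_semigroup maps_into[OF a] maps_into[OF pinv_in_I_rank[OF a]]])
  have inj: "inj_on a (dom a)"
    using a by (simp add: I_rank_def partial_inj_def)
  have a': "pinv a \<in> I_rank X n"
    using a by (rule pinv_in_I_rank)
  have "m (m (g a) (g (pinv a))) (g a) = g (pmult (pmult a (pinv a)) a)"
    using a a' by (simp add: hom pmult_in_I_rank)
  also have "\<dots> = g a"
    by (simp add: pmult_pinv_right[OF inj] pmult_idm_left)
  finally show "m (m (g a) (g (pinv a))) (g a) = g a" .
  have "m (m (g (pinv a)) (g a)) (g (pinv a)) = g (pmult (pmult (pinv a) a) (pinv a))"
    using a a' by (simp add: hom pmult_in_I_rank)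
  also have "\<dots> = g (pinv a)"
    by (simp add: pmult_pinv_left[OF inj] pmult_idm_left dom_pinv)
  finally show "m (m (g (pinv a)) (g a)) (g (pinv a)) = g (pinv a)" .
qed

lemma image_top_inv_semigroup:
  "top_inv_semigroup (g ` I_rank X n) m (subtopology T (g ` I_rank X n))"
proof (rule top_inv_subsemigroup[OF tis])
  show "g ` I_rank X n \<subseteq> U"
    using maps_into by blast
  show "m x y \<in> g ` I_rank X n" if "x \<in> g ` I_rank X n" "y \<in> g ` I_rank X n" for x y
    using that by (auto simp: hom[symmetric] pmult_in_I_rank)
  show "sinv U m x \<in> g ` I_rank X n" if "x \<in> g ` I_rank X n" for x
    using that by (auto simp: sinv_image pinv_in_I_rank)
qed

lemma image_idm_mult:
  assumes "idm Y \<in> rank_idempotents X n" "idm Z \<in> rank_idempotents X n"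
  shows "m (g (idm Y)) (g (idm Z)) = g (idm (Y \<inter> Z))"
proof -
  have "idm Y \<in> I_rank X n" "idm Z \<in> I_rank X n"
    using assms rank_idempotents_sub by blast+
  then show ?thesis
    using hom[of "idm Y" "idm Z"] by (simp add: pmult_idm_idm)
qed

lemma image_idm_down_set:
  assumes Y: "idm Y \<in> rank_idempotents X n"
  shows "down_set (g ` rank_idempotents X n) m (g (idm Y)) \<subseteq> g ` idm ` Pow Y"
proof
  fix d assume "d \<in> down_set (g ` rank_idempotents X n) m (g (idm Y))"
  then obtain Z where Z: "idm Z \<in> rank_idempotents X n" "d = g (idm Z)"
    and "m d (g (idm Y)) = d"
    by (auto simp: down_set_def rank_idempotents_def)
  then have "d = g (idm (Z \<inter> Y))"
    using image_idm_mult[OF Z(1) Y] by simp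
  then show "d \<in> g ` idm ` Pow Y"
    by blast
qed

lemma image_idm_bounded_subsemilattice:
  "bounded_subsemilattice U m T (g ` rank_idempotents X n) (2 ^ n)"
proof
  let ?E = "g ` rank_idempotents X n"
  show "top_inv_semigroup U m T"
    by (rule tis)
  show "?E \<subseteq> U"
    using rank_idempotents_sub maps_into by blast
  fix c d assume "c \<in> ?E" "d \<in> ?E"
  then obtain Y Z where "idm Y \<in> rank_idempotents X n" "idm Z \<in> rank_idempotents X n"
    and "c = g (idm Y)" "d = g (idm Z)"
    by (auto simp: rank_idempotents_def)
  then show "m c d \<in> ?E" "m c d = m d c"
    using image_idm_mult imageI[OF idm_Int_in_rank_idempotents] by (auto simp: Int_commute)
next
  let ?E = "g ` rank_idempotents X n"
  fix c assume "c \<in> ?E"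
  then obtain Y where Y: "idm Y \<in> rank_idempotents X n" "c = g (idm Y)"
    by (auto simp: rank_idempotents_def)
  then show "m c c = c"
    using image_idm_mult by simp
  have "finite Y" "card Y \<le> n"
    using Y(1) by (auto simp: idm_in_rank_idempotents)
  then have "card (g ` idm ` Pow Y) \<le> 2 ^ card Y"
    using card_image_le[of "idm ` Pow Y" g] card_image_le[of "Pow Y" idm]
    by (simp add: card_Pow)
  also have "\<dots> \<le> 2 ^ n"
    using \<open>card Y \<le> n\<close> by (simp add: power_increasing)
  finally have "finite (g ` idm ` Pow Y)" "card (g ` idm ` Pow Y) \<le> 2 ^ n"
    using \<open>finite Y\<close> by simp_all
  then show "finite (down_set ?E m c)" "card (down_set ?E m c) \<le> 2 ^ n"
    using Y image_idm_down_set[OF Y(1)] by (auto intro: finite_subset card_mono order_trans)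
qed

lemma image_idm_closed: "closedin T (g ` rank_idempotents X n)"
  by (rule bounded_subsemilattice.closed[OF image_idm_bounded_subsemilattice])

text \<open>For x in the closure of the image, x x\<inverse> and x\<inverse> x are images of idempotents: the
  continuous maps y \<mapsto> y y\<inverse> and y \<mapsto> y\<inverse> y send g a to g (idm (dom a)) and
  g (idm (ran a)), and the set of images of idempotents is closed.\<close>
lemma limit_idempotent_parts:
  assumes x: "x \<in> T closure_of (g ` I_rank X n)"
  shows "m x (sinv U m x) \<in> g ` rank_idempotents X n"
    and "m (sinv U m x) x \<in> g ` rank_idempotents X n"
proof -
  have cm: "continuous_map (prod_topology T T) T (\<lambda>(x, y). m x y)"
    and ci: "continuous_map T T (sinv U m)"
    using tis by (auto simp: top_inv_semigroup_def)
  have inj: "\<And>a. a \<in> I_rank X n \<Longrightarrow> inj_on a (dom a)"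
    by (simp add: I_rank_def partial_inj_def)
  have "(\<lambda>y. m y (sinv U m y)) ` g ` I_rank X n \<subseteq> g ` rank_idempotents X n"
    by (auto simp: sinv_image hom[symmetric] pinv_in_I_rank pmult_pinv_right inj
        intro!: imageI dom_ran_idm_in_rank_idempotents)
  then show "m x (sinv U m x) \<in> g ` rank_idempotents X n"
    using continuous_map_closure_into_closed
        [OF continuous_map_mult[OF cm continuous_map_ident ci] _ image_idm_closed x]
    by blast
  have "(\<lambda>y. m (sinv U m y) y) ` g ` I_rank X n \<subseteq> g ` rank_idempotents X n"
    by (auto simp: sinv_image hom[symmetric] pinv_in_I_rank pmult_pinv_left inj
        intro!: imageI dom_ran_idm_in_rank_idempotents)
  then show "m (sinv U m x) x \<in> g ` rank_idempotents X n"
    using continuous_map_closure_into_closed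
        [OF continuous_map_mult[OF cm ci continuous_map_ident] _ image_idm_closed x]
    by blast
qed

text \<open>Multiplying by images of idempotents idm Y on the left and idm Z on the right sends
  the image into the finite, hence closed, set of images of maps from Y to Z.\<close>
lemma sandwich_into_closed:
  assumes Y: "idm Y \<in> rank_idempotents X n" and Z: "idm Z \<in> rank_idempotents X n"
  defines "F \<equiv> {b \<in> I_rank X n. dom b \<subseteq> Y \<and> ran b \<subseteq> Z}"
  shows "(\<lambda>y. m (m (g (idm Y)) y) (g (idm Z))) ` g ` I_rank X n \<subseteq> g ` F"
    and "closedin T (g ` F)"
proof -
  have YI: "idm Y \<in> I_rank X n" and ZI: "idm Z \<in> I_rank X n"
    using Y Z rank_idempotents_sub by blast+
  show "(\<lambda>y. m (m (g (idm Y)) y) (g (idm Z))) ` g ` I_rank X n \<subseteq> g ` F"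
  proof
    fix y assume "y \<in> (\<lambda>y. m (m (g (idm Y)) y) (g (idm Z))) ` g ` I_rank X n"
    then obtain a where a: "a \<in> I_rank X n" and y: "y = m (m (g (idm Y)) (g a)) (g (idm Z))"
      by blast
    have "y = g (pmult (pmult (idm Y) a) (idm Z))"
      using a YI ZI by (simp add: y hom pmult_in_I_rank)
    moreover have "pmult (pmult (idm Y) a) (idm Z) \<in> F"
      using a YI ZI
      by (simp add: F_def pmult_in_I_rank dom_pmult_idm_left ran_pmult_idm_right)
    ultimately show "y \<in> g ` F"
      by blast
  qed
  have "finite Y" "finite Z"
    using Y Z by (auto simp: idm_in_rank_idempotents)
  then have "finite {b. dom b \<subseteq> Y \<and> ran b \<subseteq> Z}"
    by (rule finite_maps_between)
  then have "finite F"
    unfolding F_def by (rule finite_subset[rotated]) blast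
  moreover have "g ` F \<subseteq> topspace T"
    using tis maps_into by (auto simp: top_inv_semigroup_def F_def)
  moreover have "Hausdorff_space T"
    using tis by (simp add: top_inv_semigroup_def)
  ultimately show "closedin T (g ` F)"
    using closedin_Hausdorff_finite by blast
qed

text \<open>Every limit point x of the image lies in the image: x = (x x\<inverse>) x (x\<inverse> x) is fixed
  by the sandwich map built from limit_idempotent_parts, and that map sends the closure
  of the image into the closed set of sandwich_into_closed.\<close>
lemma limit_in_image:
  assumes x: "x \<in> T closure_of (g ` I_rank X n)"
  shows "x \<in> g ` I_rank X n"
proof -
  have top: "topspace T = U" and cm: "continuous_map (prod_topology T T) T (\<lambda>(x, y). m x y)"
    using tis by (auto simp: top_inv_semigroup_def)
  obtain Y Z where Y: "idm Y \<in> rank_idempotents X n" "m x (sinv U m x) = g (idm Y)"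
    and Z: "idm Z \<in> rank_idempotents X n" "m (sinv U m x) x = g (idm Z)"
    using limit_idempotent_parts[OF x] by (auto simp: rank_idempotents_def)
  let ?\<psi> = "\<lambda>y. m (m (g (idm Y)) y) (g (idm Z))"
  have xU: "x \<in> U"
    using subsetD[OF closure_of_subset_topspace x] top by simp
  note x' = sinv_inverse[OF inverse_semigroup xU]
  have assoc: "m (m x (sinv U m x)) x = m x (m (sinv U m x) x)"
    using inverse_semigroup xU x'(1) unfolding inverse_semigroup_def by blast
  have "?\<psi> x = m (m (m x (sinv U m x)) x) (m (sinv U m x) x)"
    using Y Z by simp
  also have "\<dots> = m x (m (sinv U m x) x)"
    using x' by simp
  also have "\<dots> = x"
    using x'(2) assoc by simp
  finally have fixed: "?\<psi> x = x" .
  have "g (idm Y) \<in> topspace T" "g (idm Z) \<in> topspace T"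
    using Y(1) Z(1) rank_idempotents_sub maps_into top by auto
  then have "continuous_map T T (\<lambda>y. g (idm Y))" "continuous_map T T (\<lambda>y. g (idm Z))"
    by simp_all
  then have "continuous_map T T ?\<psi>"
    by (intro continuous_map_mult[OF cm] continuous_map_ident)
  then have "?\<psi> x \<in> g ` {b \<in> I_rank X n. dom b \<subseteq> Y \<and> ran b \<subseteq> Z}"
    by (rule continuous_map_closure_into_closed[OF _ sandwich_into_closed[OF Y(1) Z(1)] x])
  then have "x \<in> g ` {b \<in> I_rank X n. dom b \<subseteq> Y \<and> ran b \<subseteq> Z}"
    by (simp only: fixed)
  then show ?thesis
    by (rule subsetD[OF image_mono, rotated]) blast
qed

theorem image_closed: "closedin T (g ` I_rank X n)"
proof -
  have "g ` I_rank X n \<subseteq> topspace T"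
    using tis maps_into by (auto simp: top_inv_semigroup_def)
  then show ?thesis
    using closure_of_subset_eq limit_in_image by blast
qed

end

section \<open>Absolute H-closedness of I_rank X n\<close>

text \<open>Let h be a homomorphism into a topological inverse semigroup S.  Its image is a
  topological inverse semigroup, and any topological embedding e of the image into a
  topological inverse semigroup makes e \<circ> h a homomorphism, whose image is closed.\<close>
theorem corollary2:
  fixes X :: "'a set" and n :: nat and \<tau> :: "('a \<rightharpoonup> 'a) topology"
  assumes "X \<noteq> {}" and "n \<ge> 1"
    and "top_inv_semigroup (I_rank X n) pmult \<tau>"
  shows "\<forall>(S :: 'b set) mS TS h.
           top_inv_semigroup S mS TS \<and>
           h ` I_rank X n \<subseteq> S \<and>
           (\<forall>x\<in>I_rank X n. \<forall>y\<in>I_rank X n. h (pmult x y) = mS (h x) (h y)) \<and>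
           continuous_map \<tau> TS h
           \<longrightarrow> H_closed_TIS TYPE('c) (h ` I_rank X n) mS (subtopology TS (h ` I_rank X n))"
proof (intro allI impI)
  fix S :: "'b set" and mS TS h
  assume "top_inv_semigroup S mS TS \<and> h ` I_rank X n \<subseteq> S \<and>
    (\<forall>x\<in>I_rank X n. \<forall>y\<in>I_rank X n. h (pmult x y) = mS (h x) (h y)) \<and> continuous_map \<tau> TS h"
  then interpret h: rank_homomorphism X n S mS TS h
    by unfold_locales auto
  have "closedin TU (e ` h ` I_rank X n)"
    if "top_inv_semigroup U mU TU \<and> e ` h ` I_rank X n \<subseteq> U \<and> inj_on e (h ` I_rank X n) \<and>
      (\<forall>x\<in>h ` I_rank X n. \<forall>y\<in>h ` I_rank X n. e (mS x y) = mU (e x) (e y)) \<and>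
      homeomorphic_map (subtopology TS (h ` I_rank X n)) (subtopology TU (e ` h ` I_rank X n)) e"
    for U :: "'c set" and mU TU e
  proof -
    interpret eh: rank_homomorphism X n U mU TU "e \<circ> h"
      using that by unfold_locales (auto simp: h.hom)
    show ?thesis
      using eh.image_closed by (simp add: image_comp)
  qed
  then show "H_closed_TIS TYPE('c) (h ` I_rank X n) mS (subtopology TS (h ` I_rank X n))"
    unfolding H_closed_TIS_def using h.image_top_inv_semigroup by blast
qed

end
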